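(* Let $G=C_n$ be a cycle, for some $n\ge3$, and let $L$ be a list-assignment with $|L(v)|=3$ for every vertex $v$. If $\alpha$ and $\beta$ are $L$-colourings, neither of which is frozen, and the lists $L(v)$ are not all identical, then $\alpha\sim\beta$.
   Context: An $L$-colouring is a proper colouring $\varphi$ with $\varphi(v)\in L(v)$ for all $v$. A vertex $v$ is frozen under $\varphi$ if every colour of $L(v)\setminus\{\varphi(v)\}$ appears on a neighbour of $v$; a colouring is frozen if all vertices are frozen. $\alpha\sim\beta$ means $\alpha$ can be transformed into $\beta$ by a sequence of single-vertex recolouring steps, each changing one vertex's colour to another colour of its list so that the colouring remains a proper $L$-colouring. *)

theory Defs
  imports Main
begin

definition cycle_adj :: "nat \<Rightarrow> nat \<Rightarrow> nat \<Rightarrow> bool" where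
  "cycle_adj n u v \<longleftrightarrow> u < n \<and> v < n \<and> (v = Suc u mod n \<or> u = Suc v mod n)"

definition L_colouring :: "'v set \<Rightarrow> ('v \<Rightarrow> 'v \<Rightarrow> bool) \<Rightarrow> ('v \<Rightarrow> 'c set) \<Rightarrow> ('v \<Rightarrow> 'c) \<Rightarrow> bool" where
  "L_colouring V E L \<phi> \<longleftrightarrow>
     (\<forall>v\<in>V. \<phi> v \<in> L v) \<and> (\<forall>u\<in>V. \<forall>v\<in>V. E u v \<longrightarrow> \<phi> u \<noteq> \<phi> v)"

definition frozen_vertex :: "'v set \<Rightarrow> ('v \<Rightarrow> 'v \<Rightarrow> bool) \<Rightarrow> ('v \<Rightarrow> 'c set) \<Rightarrow> ('v \<Rightarrow> 'c) \<Rightarrow> 'v \<Rightarrow> bool" where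
  "frozen_vertex V E L \<phi> v \<longleftrightarrow>
     (\<forall>c \<in> L v - {\<phi> v}. \<exists>u\<in>V. E v u \<and> \<phi> u = c)"

definition frozen :: "'v set \<Rightarrow> ('v \<Rightarrow> 'v \<Rightarrow> bool) \<Rightarrow> ('v \<Rightarrow> 'c set) \<Rightarrow> ('v \<Rightarrow> 'c) \<Rightarrow> bool" where
  "frozen V E L \<phi> \<longleftrightarrow> (\<forall>v\<in>V. frozen_vertex V E L \<phi> v)"

definition recolour_step :: "'v set \<Rightarrow> ('v \<Rightarrow> 'v \<Rightarrow> bool) \<Rightarrow> ('v \<Rightarrow> 'c set) \<Rightarrow> ('v \<Rightarrow> 'c) \<Rightarrow> ('v \<Rightarrow> 'c) \<Rightarrow> bool" where
  "recolour_step V E L \<alpha> \<beta> \<longleftrightarrow>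
     L_colouring V E L \<alpha> \<and> L_colouring V E L \<beta> \<and>
     (\<exists>v\<in>V. \<forall>u\<in>V. u \<noteq> v \<longrightarrow> \<alpha> u = \<beta> u)"

definition reconf :: "'v set \<Rightarrow> ('v \<Rightarrow> 'v \<Rightarrow> bool) \<Rightarrow> ('v \<Rightarrow> 'c set) \<Rightarrow> ('v \<Rightarrow> 'c) \<Rightarrow> ('v \<Rightarrow> 'c) \<Rightarrow> bool" where
  "reconf V E L \<alpha> \<beta> \<longleftrightarrow> (recolour_step V E L)\<^sup>*\<^sup>* \<alpha> \<beta>"

end

theory Submission
  imports Defs
begin

text \<open>Since the lists are not all equal, some consecutive vertices have different lists; after
  rotating the cycle these are n - 1 and 0, and we fix a colour c in L (n - 1) but not in L 0.
  A non-frozen colouring can change the colour of any vertex: recolour an unfrozen vertex, then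
  one after another the frozen vertices between it and the target, each of which sees exactly its
  two other colours on its two neighbours. In particular both colourings can be brought to colour
  vertex n - 1 with c. From then on n - 1 never blocks vertex 0, the rest of the cycle is a path
  with lists of size three, and two such colourings are matched vertex by vertex from n - 2 down
  to 0, each time first recolouring the initial segment of the path greedily out of the way.\<close>

lemma reconf_trans: "reconf V E L \<alpha> \<beta> \<Longrightarrow> reconf V E L \<beta> \<gamma> \<Longrightarrow> reconf V E L \<alpha> \<gamma>"
  unfolding reconf_def by (rule rtranclp_trans)

lemma reconf_sym:
  assumes "reconf V E L \<alpha> \<beta>"
  shows "reconf V E L \<beta> \<alpha>"
proof -
  have "symp (recolour_step V E L)"
    unfolding recolour_step_def by (rule sympI) metis
  then show ?thesis
    using assms unfolding reconf_def by (metis symp_rtranclp sympD)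
qed

lemma reconf_L_colouring:
  "reconf V E L \<alpha> \<beta> \<Longrightarrow> L_colouring V E L \<alpha> \<Longrightarrow> L_colouring V E L \<beta>"
  unfolding reconf_def by (induction rule: rtranclp_induct) (auto simp: recolour_step_def)

lemma reconf_if_eq_on:
  assumes "V \<noteq> {}" "L_colouring V E L \<alpha>" "L_colouring V E L \<beta>" "\<forall>v\<in>V. \<alpha> v = \<beta> v"
  shows "reconf V E L \<alpha> \<beta>"
  using assms unfolding reconf_def recolour_step_def by blast

lemma reconf_fun_upd:
  assumes "symp E" "\<not> E x x" "L_colouring V E L \<gamma>" "x \<in> V" "y \<in> L x"
    and "\<forall>u\<in>V. E x u \<longrightarrow> \<gamma> u \<noteq> y"
  shows "reconf V E L \<gamma> (\<gamma>(x := y))"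
proof -
  have "L_colouring V E L (\<gamma>(x := y))"
    using assms unfolding L_colouring_def by (auto dest: sympD)
  then have "recolour_step V E L \<gamma> (\<gamma>(x := y))"
    using assms(3,4) unfolding recolour_step_def by auto
  then show ?thesis
    unfolding reconf_def by blast
qed

lemma reconf_recolour_unfrozen:
  assumes "symp E" "\<not> E v v" "L_colouring V E L \<gamma>" "v \<in> V" "\<not> frozen_vertex V E L \<gamma> v"
  obtains y where "y \<noteq> \<gamma> v" "reconf V E L \<gamma> (\<gamma>(v := y))"
  using assms reconf_fun_upd[OF assms(1-4)] unfolding frozen_vertex_def by blast

text \<open>A frozen vertex of degree two with a list of size three sees both of its other colours
  on its neighbours, so the colour given up by one neighbour is free while the other keeps its own.\<close>
lemma reconf_recolour_frozen_degree_two: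
  assumes "symp E" "\<not> E j j" "L_colouring V E L \<gamma>" "L_colouring V E L \<gamma>'"
    and "j \<in> V" "frozen_vertex V E L \<gamma> j" "finite (L j)" "card (L j) = 3"
    and "{u\<in>V. E j u} = {a, b}" "\<gamma>' a = \<gamma> a" "\<gamma>' b \<noteq> \<gamma> b"
  shows "\<gamma> b \<noteq> \<gamma> j" "reconf V E L \<gamma>' (\<gamma>'(j := \<gamma> b))"
proof -
  have ab: "a \<in> V" "b \<in> V" "E j a" "E j b"
    using assms(9) by blast+
  show "\<gamma> b \<noteq> \<gamma> j"
    using assms(1,3,5) ab unfolding L_colouring_def by (metis sympD)
  have sub: "L j - {\<gamma> j} \<subseteq> {\<gamma> a, \<gamma> b}"
    using assms(6,9) unfolding frozen_vertex_def by (force simp: set_eq_iff)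
  have two: "card (L j - {\<gamma> j}) = 2"
    using assms(3,5,7,8) unfolding L_colouring_def by simp
  moreover have "card {\<gamma> a, \<gamma> b} \<le> 2"
    by (cases "\<gamma> a = \<gamma> b") auto
  ultimately have "L j - {\<gamma> j} = {\<gamma> a, \<gamma> b}"
    using card_seteq[OF _ sub] by simp
  moreover from this have "\<gamma> a \<noteq> \<gamma> b"
    using two by (cases "\<gamma> a = \<gamma> b") simp_all
  moreover have "\<forall>u\<in>V. E j u \<longrightarrow> u = a \<or> u = b"
    using assms(9) by blast
  ultimately have "\<forall>u\<in>V. E j u \<longrightarrow> \<gamma>' u \<noteq> \<gamma> b" "\<gamma> b \<in> L j"
    using assms(10,11) by auto
  then show "reconf V E L \<gamma>' (\<gamma>'(j := \<gamma> b))"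
    using reconf_fun_upd[OF assms(1,2,4,5)] by blast
qed

definition graph_automorphism :: "'v set \<Rightarrow> ('v \<Rightarrow> 'v \<Rightarrow> bool) \<Rightarrow> ('v \<Rightarrow> 'v) \<Rightarrow> bool" where
  "graph_automorphism V E \<sigma> \<longleftrightarrow> bij \<sigma> \<and> \<sigma> ` V = V \<and> (\<forall>x\<in>V. \<forall>y\<in>V. E (\<sigma> x) (\<sigma> y) \<longleftrightarrow> E x y)"

lemma graph_automorphism_mem: "graph_automorphism V E \<sigma> \<Longrightarrow> x \<in> V \<Longrightarrow> \<sigma> x \<in> V"
  unfolding graph_automorphism_def by blast

lemma graph_automorphism_inv:
  assumes "graph_automorphism V E \<sigma>"
  shows "graph_automorphism V E (inv \<sigma>)"
proof -
  have bij: "bij \<sigma>" and img: "\<sigma> ` V = V" and adj: "\<forall>x\<in>V. \<forall>y\<in>V. E (\<sigma> x) (\<sigma> y) \<longleftrightarrow> E x y"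
    using assms unfolding graph_automorphism_def by auto
  have img_inv: "inv \<sigma> ` V = V"
    by (metis bij bij_is_inj image_inv_f_f img)
  have "E (inv \<sigma> x) (inv \<sigma> y) \<longleftrightarrow> E x y" if "x \<in> V" "y \<in> V" for x y
  proof -
    have "inv \<sigma> x \<in> V" "inv \<sigma> y \<in> V"
      using that img_inv by blast+
    then have "E (inv \<sigma> x) (inv \<sigma> y) \<longleftrightarrow> E (\<sigma> (inv \<sigma> x)) (\<sigma> (inv \<sigma> y))"
      using adj by simp
    then show ?thesis
      by (simp add: bij bij_is_surj surj_f_inv_f)
  qed
  then show ?thesis
    using bij_imp_bij_inv[OF bij] img_inv unfolding graph_automorphism_def by blast
qed

lemma o_o_inv_cancel: "surj f \<Longrightarrow> g \<circ> f \<circ> inv f = g"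
  by (simp add: fun_eq_iff surj_f_inv_f)

lemma L_colouring_comp:
  assumes "graph_automorphism V E \<sigma>" "L_colouring V E L \<alpha>"
  shows "L_colouring V E (L \<circ> \<sigma>) (\<alpha> \<circ> \<sigma>)"
proof -
  have "\<sigma> x \<in> V" if "x \<in> V" for x
    using assms(1) that unfolding graph_automorphism_def by blast
  then show ?thesis
    using assms unfolding graph_automorphism_def L_colouring_def by simp
qed

lemma frozen_comp:
  assumes "graph_automorphism V E \<sigma>" "frozen V E L \<alpha>"
  shows "frozen V E (L \<circ> \<sigma>) (\<alpha> \<circ> \<sigma>)"
  unfolding frozen_def frozen_vertex_def
proof (intro ballI)
  fix v c assume v: "v \<in> V" and c: "c \<in> (L \<circ> \<sigma>) v - {(\<alpha> \<circ> \<sigma>) v}"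
  have img: "\<sigma> ` V = V" and adj: "\<forall>x\<in>V. \<forall>y\<in>V. E (\<sigma> x) (\<sigma> y) \<longleftrightarrow> E x y"
    using assms(1) unfolding graph_automorphism_def by auto
  have "\<sigma> v \<in> V"
    using v img by blast
  then obtain w where "w \<in> V" "E (\<sigma> v) w" "\<alpha> w = c"
    using assms(2) c unfolding frozen_def frozen_vertex_def by auto
  moreover obtain u where "u \<in> V" "w = \<sigma> u"
    using \<open>w \<in> V\<close> img by auto
  moreover have "E v u"
    using adj v \<open>u \<in> V\<close> \<open>E (\<sigma> v) w\<close> \<open>w = \<sigma> u\<close> by blast
  ultimately show "\<exists>u\<in>V. E v u \<and> (\<alpha> \<circ> \<sigma>) u = c"
    by auto
qed

lemma frozen_comp_iff:
  assumes "graph_automorphism V E \<sigma>"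
  shows "frozen V E (L \<circ> \<sigma>) (\<alpha> \<circ> \<sigma>) \<longleftrightarrow> frozen V E L \<alpha>"
proof
  have bij: "bij \<sigma>"
    using assms unfolding graph_automorphism_def by blast
  assume "frozen V E (L \<circ> \<sigma>) (\<alpha> \<circ> \<sigma>)"
  from frozen_comp[OF graph_automorphism_inv[OF assms] this]
  show "frozen V E L \<alpha>"
    unfolding o_o_inv_cancel[OF bij_is_surj[OF bij]] .
qed (rule frozen_comp[OF assms])

lemma recolour_step_comp:
  assumes "graph_automorphism V E \<sigma>" "recolour_step V E L \<alpha> \<beta>"
  shows "recolour_step V E (L \<circ> \<sigma>) (\<alpha> \<circ> \<sigma>) (\<beta> \<circ> \<sigma>)"
proof -
  have inj: "inj \<sigma>"
    using assms(1) unfolding graph_automorphism_def by (simp add: bij_is_inj)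
  obtain v where v: "v \<in> V" "\<forall>u\<in>V. u \<noteq> v \<longrightarrow> \<alpha> u = \<beta> u"
    using assms(2) unfolding recolour_step_def by blast
  have "inv \<sigma> v \<in> V"
    using graph_automorphism_mem[OF graph_automorphism_inv[OF assms(1)] v(1)] .
  moreover have "\<forall>u\<in>V. u \<noteq> inv \<sigma> v \<longrightarrow> (\<alpha> \<circ> \<sigma>) u = (\<beta> \<circ> \<sigma>) u"
    using v(2) graph_automorphism_mem[OF assms(1)] inv_f_f[OF inj] by fastforce
  moreover have "L_colouring V E (L \<circ> \<sigma>) (\<alpha> \<circ> \<sigma>)" "L_colouring V E (L \<circ> \<sigma>) (\<beta> \<circ> \<sigma>)"
    using assms L_colouring_comp unfolding recolour_step_def by blast+
  ultimately show ?thesis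
    unfolding recolour_step_def by blast
qed

lemma reconf_comp:
  assumes "graph_automorphism V E \<sigma>" "reconf V E L \<alpha> \<beta>"
  shows "reconf V E (L \<circ> \<sigma>) (\<alpha> \<circ> \<sigma>) (\<beta> \<circ> \<sigma>)"
  using assms(2) unfolding reconf_def
proof (induction rule: rtranclp_induct)
  case (step \<beta> \<gamma>)
  then show ?case
    using recolour_step_comp[OF assms(1) step(2)] by (meson rtranclp.rtrancl_into_rtrancl)
qed simp

lemma reconf_comp_iff:
  assumes "graph_automorphism V E \<sigma>"
  shows "reconf V E (L \<circ> \<sigma>) (\<alpha> \<circ> \<sigma>) (\<beta> \<circ> \<sigma>) \<longleftrightarrow> reconf V E L \<alpha> \<beta>"
proof
  have bij: "bij \<sigma>"
    using assms unfolding graph_automorphism_def by blast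
  assume "reconf V E (L \<circ> \<sigma>) (\<alpha> \<circ> \<sigma>) (\<beta> \<circ> \<sigma>)"
  from reconf_comp[OF graph_automorphism_inv[OF assms] this]
  show "reconf V E L \<alpha> \<beta>"
    unfolding o_o_inv_cancel[OF bij_is_surj[OF bij]] .
qed (rule reconf_comp[OF assms])

lemma symp_cycle_adj: "symp (cycle_adj n)"
  unfolding cycle_adj_def by (rule sympI) auto

lemma cycle_adj_irrefl: "2 \<le> n \<Longrightarrow> \<not> cycle_adj n u u"
  unfolding cycle_adj_def by (cases "Suc u = n") auto

lemma cycle_adj_iff:
  assumes "u < n" "v < n"
  shows "cycle_adj n u v \<longleftrightarrow> v = Suc u \<or> u = Suc v \<or> (u = n - 1 \<and> v = 0) \<or> (u = 0 \<and> v = n - 1)"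
  using assms unfolding cycle_adj_def
  by (cases "Suc u = n"; cases "Suc v = n") (auto simp: mod_Suc)

lemma cycle_adj_first: "3 \<le> n \<Longrightarrow> u < n \<Longrightarrow> cycle_adj n 0 u \<longleftrightarrow> u = n - 1 \<or> u = 1"
  by (auto simp: cycle_adj_iff)

lemma cycle_adj_inner: "0 < j \<Longrightarrow> Suc j < n \<Longrightarrow> u < n \<Longrightarrow> cycle_adj n j u \<longleftrightarrow> u = j - 1 \<or> u = Suc j"
  by (auto simp: cycle_adj_iff)

lemma cycle_adj_last: "3 \<le> n \<Longrightarrow> u < n \<Longrightarrow> cycle_adj n (n - 1) u \<longleftrightarrow> u = n - 2 \<or> u = 0"
  by (auto simp: cycle_adj_iff)

text \<open>Vertices outside the cycle are fixed, so that a rotation is a permutation of nat.\<close>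
definition cycle_rotation :: "nat \<Rightarrow> nat \<Rightarrow> nat \<Rightarrow> nat" where
  "cycle_rotation n s x = (if x < n then (x + s) mod n else x)"

lemma cycle_rotation_add: "cycle_rotation n s (cycle_rotation n t x) = cycle_rotation n (s + t) x"
proof (cases "x < n")
  case True
  have "((x + t) mod n + s) mod n = (x + t + s) mod n"
    by (rule mod_add_left_eq)
  then have "((x + t) mod n + s) mod n = (x + (s + t)) mod n"
    by (simp add: ac_simps)
  then show ?thesis
    using True unfolding cycle_rotation_def by simp
qed (simp add: cycle_rotation_def)

lemma cycle_rotation_multiple: "cycle_rotation n (k * n) = id"
  unfolding cycle_rotation_def by auto

lemma bij_cycle_rotation: "bij (cycle_rotation n s)"
proof (rule o_bij)
  have "cycle_rotation n (s + (n - 1) * s) = id"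
    using cycle_rotation_multiple[of n s] by (cases n) (auto simp: algebra_simps cycle_rotation_def)
  then show "cycle_rotation n s \<circ> cycle_rotation n ((n - 1) * s) = id"
    "cycle_rotation n ((n - 1) * s) \<circ> cycle_rotation n s = id"
    by (simp_all add: fun_eq_iff cycle_rotation_add add.commute)
qed

lemma cycle_rotation_automorphism: "graph_automorphism {0..<n} (cycle_adj n) (cycle_rotation n s)"
proof -
  have inj: "inj (cycle_rotation n s)"
    using bij_cycle_rotation bij_is_inj by blast
  have maps: "cycle_rotation n s x < n" if "x < n" for x
    using that unfolding cycle_rotation_def by auto
  then have "cycle_rotation n s ` {0..<n} = {0..<n}"
    using inj by (intro endo_inj_surj) (auto intro: inj_on_subset)
  moreover have "cycle_adj n (cycle_rotation n s x) (cycle_rotation n s y) \<longleftrightarrow> cycle_adj n x y"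
    if "x < n" "y < n" for x y
  proof -
    have "Suc (cycle_rotation n s z) mod n = cycle_rotation n s (Suc z mod n)" if "z < n" for z
      using that unfolding cycle_rotation_def by (simp add: mod_Suc_eq mod_add_left_eq)
    then show ?thesis
      using that maps inj unfolding cycle_adj_def by (auto simp: inj_eq)
  qed
  ultimately show ?thesis
    unfolding graph_automorphism_def using bij_cycle_rotation by auto
qed

lemma ex_avoid_two:
  assumes "finite A" "2 < card A"
  shows "\<exists>y\<in>A. y \<noteq> p \<and> y \<noteq> q"
proof (rule ccontr)
  assume "\<not> ?thesis"
  then have "card A \<le> card {p, q}"
    by (intro card_mono) auto
  also have "\<dots> \<le> 2"
    by (cases "p = q") auto
  finally show False
    using assms(2) by simp
qed

locale three_list_cycle =
  fixes n :: nat and L :: "nat \<Rightarrow> 'c set"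
  assumes three_le: "3 \<le> n"
    and card_L: "\<forall>v<n. finite (L v) \<and> card (L v) = 3"
begin

abbreviation colouring where "colouring \<equiv> L_colouring {0..<n} (cycle_adj n) L"
abbreviation reaches where "reaches \<equiv> reconf {0..<n} (cycle_adj n) L"
abbreviation frozen_at where "frozen_at \<equiv> frozen_vertex {0..<n} (cycle_adj n) L"

lemma not_cycle_adj_self: "\<not> cycle_adj n u u"
  using cycle_adj_irrefl three_le by simp

lemma reaches_fun_upd:
  assumes "colouring \<gamma>" "x < n" "y \<in> L x" "\<forall>u<n. cycle_adj n x u \<longrightarrow> \<gamma> u \<noteq> y"
  shows "reaches \<gamma> (\<gamma>(x := y))"
  by (rule reconf_fun_upd[OF symp_cycle_adj not_cycle_adj_self assms(1)]) (use assms in auto)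

lemma reaches_recolour_frozen:
  assumes "colouring \<gamma>" "colouring \<gamma>'" "j < n" "frozen_at \<gamma> j"
    and "{u \<in> {0..<n}. cycle_adj n j u} = {a, b}" "\<gamma>' a = \<gamma> a" "\<gamma>' b \<noteq> \<gamma> b"
  shows "\<gamma> b \<noteq> \<gamma> j" "reaches \<gamma>' (\<gamma>'(j := \<gamma> b))"
  using reconf_recolour_frozen_degree_two[OF symp_cycle_adj not_cycle_adj_self assms(1,2) _ assms(4) _ _ assms(5-7)]
    card_L assms(3) by auto

text \<open>The bound z < n - 1 keeps vertex n - 1, the other neighbour of 0, untouched.\<close>
lemma reaches_change_below_unfrozen:
  assumes "colouring \<gamma>" "z < n - 1" "\<not> frozen_at \<gamma> z" "\<forall>i<z. frozen_at \<gamma> i" "j \<le> z"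
  shows "\<exists>\<gamma>'. reaches \<gamma> \<gamma>' \<and> \<gamma>' j \<noteq> \<gamma> j \<and> (\<forall>i<n. i < j \<or> z < i \<longrightarrow> \<gamma>' i = \<gamma> i)"
  using assms(5)
proof (induction j rule: inc_induct)
  case base
  have "z \<in> {0..<n}"
    using assms(2) by simp
  then obtain y where "y \<noteq> \<gamma> z" "reaches \<gamma> (\<gamma>(z := y))"
    by (rule reconf_recolour_unfrozen[OF symp_cycle_adj not_cycle_adj_self assms(1) _ assms(3)])
  moreover have "(\<gamma>(z := y)) z \<noteq> \<gamma> z" "\<forall>i<n. i < z \<or> z < i \<longrightarrow> (\<gamma>(z := y)) i = \<gamma> i"
    using \<open>y \<noteq> \<gamma> z\<close> by auto
  ultimately show ?case
    by blast
next
  case (step j)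
  then obtain \<gamma>' where \<gamma>': "reaches \<gamma> \<gamma>'" "\<gamma>' (Suc j) \<noteq> \<gamma> (Suc j)"
      "\<forall>i<n. i < Suc j \<or> z < i \<longrightarrow> \<gamma>' i = \<gamma> i"
    by blast
  define a where "a = (if j = 0 then n - 1 else j - 1)"
  have nbhd: "{u \<in> {0..<n}. cycle_adj n j u} = {a, Suc j}"
    using three_le step.hyps assms(2) unfolding a_def by (auto simp: cycle_adj_first cycle_adj_inner)
  have unchanged: "\<gamma>' a = \<gamma> a"
    using \<gamma>'(3) step.hyps assms(2) unfolding a_def by auto
  have "colouring \<gamma>'"
    using reconf_L_colouring[OF \<gamma>'(1) assms(1)] .
  moreover have "j < n" "frozen_at \<gamma> j"
    using assms(2,4) step.hyps by auto
  ultimately have "\<gamma> (Suc j) \<noteq> \<gamma> j" "reaches \<gamma>' (\<gamma>'(j := \<gamma> (Suc j)))"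
    using reaches_recolour_frozen[OF assms(1) _ _ _ nbhd unchanged \<gamma>'(2)] by simp_all
  then have "reaches \<gamma> (\<gamma>'(j := \<gamma> (Suc j)))" "(\<gamma>'(j := \<gamma> (Suc j))) j \<noteq> \<gamma> j"
    "\<forall>i<n. i < j \<or> z < i \<longrightarrow> (\<gamma>'(j := \<gamma> (Suc j))) i = \<gamma> i"
    using reconf_trans[OF \<gamma>'(1)] \<gamma>'(3) step.hyps by auto
  then show ?case
    by blast
qed

lemma reaches_change_first:
  assumes "colouring \<gamma>" "\<not> frozen {0..<n} (cycle_adj n) L \<gamma>"
  obtains \<gamma>' where "reaches \<gamma> \<gamma>'" "\<gamma>' 0 \<noteq> \<gamma> 0"
proof -
  define z where "z = (LEAST z. z < n \<and> \<not> frozen_at \<gamma> z)"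
  have "\<exists>z. z < n \<and> \<not> frozen_at \<gamma> z"
    using assms(2) unfolding frozen_def by auto
  then have z: "z < n" "\<not> frozen_at \<gamma> z"
    unfolding z_def by (metis (mono_tags, lifting) LeastI_ex)+
  then have below: "\<forall>i<z. frozen_at \<gamma> i"
    unfolding z_def using not_less_Least order.strict_trans by blast
  show ?thesis
  proof (cases "z < n - 1")
    case True
    then show ?thesis
      using reaches_change_below_unfrozen[OF assms(1) True z(2) below] that by blast
  next
    case False
    then have last: "z = n - 1"
      using z(1) by simp
    have "n - 1 \<in> {0..<n}"
      using three_le by simp
    then obtain y where y: "y \<noteq> \<gamma> (n - 1)" "reaches \<gamma> (\<gamma>(n - 1 := y))"
      using reconf_recolour_unfrozen[OF symp_cycle_adj not_cycle_adj_self assms(1)] z(2) last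
      by metis
    have "{u \<in> {0..<n}. cycle_adj n 0 u} = {1, n - 1}"
      using three_le by (auto simp: cycle_adj_first)
    moreover have "frozen_at \<gamma> 0" "(\<gamma>(n - 1 := y)) 1 = \<gamma> 1" "(\<gamma>(n - 1 := y)) (n - 1) \<noteq> \<gamma> (n - 1)"
      using below last three_le y(1) by auto
    ultimately have changed: "\<gamma> (n - 1) \<noteq> \<gamma> 0"
      and step: "reaches (\<gamma>(n - 1 := y)) (\<gamma>(n - 1 := y, 0 := \<gamma> (n - 1)))"
      using reaches_recolour_frozen[OF assms(1) reconf_L_colouring[OF y(2) assms(1)]] three_le
      by simp_all
    show ?thesis
    proof (rule that)
      show "reaches \<gamma> (\<gamma>(n - 1 := y, 0 := \<gamma> (n - 1)))"
        using reconf_trans[OF y(2) step] .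
      show "(\<gamma>(n - 1 := y, 0 := \<gamma> (n - 1))) 0 \<noteq> \<gamma> 0"
        using changed by simp
    qed
  qed
qed

lemma reaches_change_at:
  assumes "colouring \<gamma>" "\<not> frozen {0..<n} (cycle_adj n) L \<gamma>" "t < n"
  obtains \<gamma>' where "reaches \<gamma> \<gamma>'" "\<gamma>' t \<noteq> \<gamma> t"
proof -
  define \<sigma> where "\<sigma> = cycle_rotation n t"
  have aut: "graph_automorphism {0..<n} (cycle_adj n) \<sigma>"
    unfolding \<sigma>_def by (rule cycle_rotation_automorphism)
  have "\<sigma> v < n" if "v < n" for v
    using graph_automorphism_mem[OF aut, of v] that by simp
  then interpret rotated: three_list_cycle n "L \<circ> \<sigma>"
    using three_le card_L by unfold_locales auto
  obtain \<gamma>\<^sub>1 where \<gamma>\<^sub>1: "rotated.reaches (\<gamma> \<circ> \<sigma>) \<gamma>\<^sub>1" "\<gamma>\<^sub>1 0 \<noteq> \<gamma> (\<sigma> 0)"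
    using rotated.reaches_change_first L_colouring_comp[OF aut assms(1)] frozen_comp_iff[OF aut] assms(2)
    by (metis comp_apply)
  have inj: "inj \<sigma>"
    using aut bij_is_inj unfolding graph_automorphism_def by blast
  from o_inv_o_cancel[OF inj, of \<gamma>\<^sub>1, symmetric] have "reaches \<gamma> (\<gamma>\<^sub>1 \<circ> inv \<sigma>)"
    using \<gamma>\<^sub>1(1) reconf_comp_iff[OF aut] by metis
  moreover have "\<sigma> 0 = t"
    using assms(3) unfolding \<sigma>_def cycle_rotation_def by simp
  ultimately show ?thesis
    using that \<gamma>\<^sub>1(2) inv_f_f[OF inj, of 0] by simp
qed

end

locale three_list_cycle_cut = three_list_cycle n L for n and L :: "nat \<Rightarrow> 'c set" +
  fixes c :: 'c
  assumes c_in_last: "c \<in> L (n - 1)" and c_notin_first: "c \<notin> L 0"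
begin

lemma reaches_avoid_colour:
  assumes "colouring \<gamma>" "\<gamma> (n - 1) = c" "m \<le> n - 2"
  shows "\<exists>\<gamma>'. reaches \<gamma> \<gamma>' \<and> \<gamma>' m \<noteq> x \<and> (\<forall>i<n. m < i \<longrightarrow> \<gamma>' i = \<gamma> i)"
  using assms(3)
proof (induction m arbitrary: x)
  case 0
  obtain y where y: "y \<in> L 0" "y \<noteq> x" "y \<noteq> \<gamma> 1"
    using ex_avoid_two[of "L 0" x "\<gamma> 1"] card_L three_le by auto
  then have "\<forall>u<n. cycle_adj n 0 u \<longrightarrow> \<gamma> u \<noteq> y"
    using assms(2) c_notin_first three_le by (auto simp: cycle_adj_first)
  then have "reaches \<gamma> (\<gamma>(0 := y))"
    using reaches_fun_upd[OF assms(1) _ y(1)] three_le by simp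
  moreover have "(\<gamma>(0 := y)) 0 \<noteq> x" "\<forall>i<n. 0 < i \<longrightarrow> (\<gamma>(0 := y)) i = \<gamma> i"
    using y(2) by auto
  ultimately show ?case
    by blast
next
  case (Suc m)
  obtain y where y: "y \<in> L (Suc m)" "y \<noteq> x" "y \<noteq> \<gamma> (Suc (Suc m))"
    using ex_avoid_two[of "L (Suc m)" x "\<gamma> (Suc (Suc m))"] card_L Suc.prems three_le by auto
  have "m \<le> n - 2"
    using Suc.prems by simp
  then obtain \<gamma>' where \<gamma>': "reaches \<gamma> \<gamma>'" "\<gamma>' m \<noteq> y" "\<forall>i<n. m < i \<longrightarrow> \<gamma>' i = \<gamma> i"
    using Suc.IH by blast
  have "\<forall>u<n. cycle_adj n (Suc m) u \<longrightarrow> \<gamma>' u \<noteq> y"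
    using Suc.prems three_le \<gamma>'(2,3) y(3) by (auto simp: cycle_adj_inner)
  then have "reaches \<gamma>' (\<gamma>'(Suc m := y))"
    using reaches_fun_upd[OF reconf_L_colouring[OF \<gamma>'(1) assms(1)] _ y(1)] Suc.prems three_le by simp
  then have "reaches \<gamma> (\<gamma>'(Suc m := y))"
    by (rule reconf_trans[OF \<gamma>'(1)])
  moreover have "(\<gamma>'(Suc m := y)) (Suc m) \<noteq> x" "\<forall>i<n. Suc m < i \<longrightarrow> (\<gamma>'(Suc m := y)) i = \<gamma> i"
    using y(2) \<gamma>'(3) by auto
  ultimately show ?case
    by blast
qed

lemma reaches_if_agree_from:
  assumes "colouring \<gamma>" "colouring \<delta>" "\<delta> (n - 1) = c" "k \<le> n - 1" "\<forall>i<n. k \<le> i \<longrightarrow> \<gamma> i = \<delta> i"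
  shows "reaches \<gamma> \<delta>"
  using assms
proof (induction k arbitrary: \<gamma>)
  case 0
  then show ?case
    by (intro reconf_if_eq_on) (use three_le in auto)
next
  case (Suc k)
  have k: "k < n" "0 < k \<Longrightarrow> k - 1 \<le> n - 2"
    using Suc.prems(4) by auto
  have free: "\<forall>u<n. cycle_adj n k u \<longrightarrow> \<delta> u \<noteq> \<delta> k"
    using Suc.prems(2) k(1) unfolding L_colouring_def by force
  obtain \<gamma>' where \<gamma>': "reaches \<gamma> \<gamma>'" "\<forall>i<n. k < i \<longrightarrow> \<gamma>' i = \<gamma> i" "0 < k \<longrightarrow> \<gamma>' (k - 1) \<noteq> \<delta> k"
  proof (cases "k = 0")
    case True
    then show ?thesis
      by (intro that[of \<gamma>]) (auto simp: reconf_def)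
  next
    case False
    have "\<gamma> (n - 1) = c"
      using Suc.prems(3-5) by simp
    then obtain \<gamma>' where "reaches \<gamma> \<gamma>'" "\<gamma>' (k - 1) \<noteq> \<delta> k" "\<forall>i<n. k - 1 < i \<longrightarrow> \<gamma>' i = \<gamma> i"
      using reaches_avoid_colour[OF Suc.prems(1) _ k(2)] False by blast
    then show ?thesis
      by (intro that[of \<gamma>']) auto
  qed
  have "\<forall>u<n. cycle_adj n k u \<longrightarrow> \<gamma>' u \<noteq> \<delta> k"
  proof (intro allI impI)
    fix u assume u: "u < n" "cycle_adj n k u"
    then have "u = k - 1 \<and> 0 < k \<or> k < u"
      using Suc.prems(4) by (auto simp: cycle_adj_iff)
    then show "\<gamma>' u \<noteq> \<delta> k"
      using \<gamma>'(2,3) Suc.prems(5) free u by auto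
  qed
  moreover have "colouring \<gamma>'"
    using reconf_L_colouring[OF \<gamma>'(1) Suc.prems(1)] .
  moreover have "\<delta> k \<in> L k"
    using Suc.prems(2) k(1) unfolding L_colouring_def by simp
  ultimately have "reaches \<gamma>' (\<gamma>'(k := \<delta> k))"
    using reaches_fun_upd k(1) by blast
  then have "reaches \<gamma> (\<gamma>'(k := \<delta> k))"
    by (rule reconf_trans[OF \<gamma>'(1)])
  moreover have "reaches (\<gamma>'(k := \<delta> k)) \<delta>"
  proof (rule Suc.IH)
    show "colouring (\<gamma>'(k := \<delta> k))"
      using reconf_L_colouring[OF calculation Suc.prems(1)] .
    show "\<forall>i<n. k \<le> i \<longrightarrow> (\<gamma>'(k := \<delta> k)) i = \<delta> i"
      using \<gamma>'(2) Suc.prems(5) by (auto simp: le_less)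
  qed (use Suc.prems in auto)
  ultimately show ?case
    by (rule reconf_trans)
qed

lemma reaches_cut_colour_at_last:
  assumes "colouring \<gamma>" "\<not> frozen {0..<n} (cycle_adj n) L \<gamma>"
  obtains \<gamma>' where "reaches \<gamma> \<gamma>'" "\<gamma>' (n - 1) = c"
proof -
  obtain \<gamma>\<^sub>1 where \<gamma>\<^sub>1: "reaches \<gamma> \<gamma>\<^sub>1" "\<gamma>\<^sub>1 (n - 2) \<noteq> c"
  proof (cases "\<gamma> (n - 2) = c")
    case True
    then show ?thesis
      using reaches_change_at[OF assms, of "n - 2"] three_le that by auto
  next
    case False
    then show ?thesis
      by (intro that[of \<gamma>]) (simp_all add: reconf_def)
  qed
  have "colouring \<gamma>\<^sub>1"
    using reconf_L_colouring[OF \<gamma>\<^sub>1(1) assms(1)] .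
  then have "\<gamma>\<^sub>1 0 \<noteq> c"
    using c_notin_first three_le unfolding L_colouring_def by auto
  moreover have "\<forall>u<n. cycle_adj n (n - 1) u \<longrightarrow> u = n - 2 \<or> u = 0"
    using cycle_adj_last[OF three_le] by blast
  ultimately have "\<forall>u<n. cycle_adj n (n - 1) u \<longrightarrow> \<gamma>\<^sub>1 u \<noteq> c"
    using \<gamma>\<^sub>1(2) by auto
  then have "reaches \<gamma>\<^sub>1 (\<gamma>\<^sub>1(n - 1 := c))"
    using reaches_fun_upd[OF \<open>colouring \<gamma>\<^sub>1\<close> _ c_in_last] three_le by simp
  then show ?thesis
    using that reconf_trans[OF \<gamma>\<^sub>1(1)] fun_upd_same by metis
qed

lemma reaches_nonfrozen:
  assumes "colouring \<alpha>" "colouring \<beta>"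
    and "\<not> frozen {0..<n} (cycle_adj n) L \<alpha>" "\<not> frozen {0..<n} (cycle_adj n) L \<beta>"
  shows "reaches \<alpha> \<beta>"
proof -
  obtain \<alpha>' where \<alpha>': "reaches \<alpha> \<alpha>'" "\<alpha>' (n - 1) = c"
    using reaches_cut_colour_at_last[OF assms(1,3)] .
  obtain \<beta>' where \<beta>': "reaches \<beta> \<beta>'" "\<beta>' (n - 1) = c"
    using reaches_cut_colour_at_last[OF assms(2,4)] .
  have "reaches \<alpha>' \<beta>'"
  proof (rule reaches_if_agree_from)
    show "colouring \<alpha>'" "colouring \<beta>'"
      using reconf_L_colouring \<alpha>'(1) \<beta>'(1) assms(1,2) by blast+
    have "\<forall>i<n. n - 1 \<le> i \<longrightarrow> i = n - 1"
      by auto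
    then show "\<forall>i<n. n - 1 \<le> i \<longrightarrow> \<alpha>' i = \<beta>' i"
      using \<alpha>'(2) \<beta>'(2) by auto
  qed (use \<beta>'(2) in auto)
  then show ?thesis
    using reconf_trans[OF \<alpha>'(1)] reconf_trans reconf_sym[OF \<beta>'(1)] by blast
qed

end

lemma ex_consecutive_neq:
  assumes "\<exists>u<n. \<exists>v<n. f u \<noteq> f v"
  shows "\<exists>i. Suc i < n \<and> f i \<noteq> f (Suc i)"
proof (rule ccontr)
  assume "\<not> ?thesis"
  then have "f i = f 0" if "i < n" for i
    using that by (induction i) auto
  then show False
    using assms by metis
qed

theorem mainTheorem12:
  fixes n :: nat and L :: "nat \<Rightarrow> 'c set" and \<alpha> \<beta> :: "nat \<Rightarrow> 'c"
  assumes "n \<ge> 3"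
    and "\<forall>v<n. finite (L v) \<and> card (L v) = 3"
    and "L_colouring {0..<n} (cycle_adj n) L \<alpha>"
    and "L_colouring {0..<n} (cycle_adj n) L \<beta>"
    and "\<not> frozen {0..<n} (cycle_adj n) L \<alpha>"
    and "\<not> frozen {0..<n} (cycle_adj n) L \<beta>"
    and "\<exists>u<n. \<exists>v<n. L u \<noteq> L v"
  shows "reconf {0..<n} (cycle_adj n) L \<alpha> \<beta>"
proof -
  obtain i where i: "Suc i < n" "L i \<noteq> L (Suc i)"
    using ex_consecutive_neq[OF assms(7)] by blast
  then have "\<not> L i \<subseteq> L (Suc i)"
    using card_subset_eq[of "L (Suc i)" "L i"] assms(2) by (metis Suc_lessD)
  then obtain c where c: "c \<in> L i" "c \<notin> L (Suc i)"
    by blast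
  define \<sigma> where "\<sigma> = cycle_rotation n (Suc i)"
  have aut: "graph_automorphism {0..<n} (cycle_adj n) \<sigma>"
    unfolding \<sigma>_def by (rule cycle_rotation_automorphism)
  have "\<sigma> 0 = Suc i" "\<sigma> (n - 1) = i"
    using i(1) unfolding \<sigma>_def cycle_rotation_def by auto
  moreover have "\<sigma> v < n" if "v < n" for v
    using graph_automorphism_mem[OF aut, of v] that by simp
  ultimately interpret three_list_cycle_cut n "L \<circ> \<sigma>" c
    using assms(1,2) c by unfold_locales auto
  have "reconf {0..<n} (cycle_adj n) (L \<circ> \<sigma>) (\<alpha> \<circ> \<sigma>) (\<beta> \<circ> \<sigma>)"
    using reaches_nonfrozen L_colouring_comp[OF aut] frozen_comp_iff[OF aut] assms(3-6) by blast
  then show ?thesis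
    using reconf_comp_iff[OF aut] by blast
qed

end
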